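(* Let $L$ be a distributive lattice with generated Boolean algebra $B$, $n\ge1$, $a_i,b_i\in L$ with $a_i<b_i$ for $i\in[n]$, $\widehat{\mathbf e}_I\in L^n$ ($I\subseteq[n]$) the tuple with $i$-th component $b_i$ if $i\in I$ and $a_i$ otherwise, $D=\{\widehat{\mathbf e}_I:I\subseteq[n]\}$, and $f\colon D\to L$ monotone and satisfying $$f(\widehat{\mathbf e}_{I\cup\{k\}})\wedge a_k\le f(\widehat{\mathbf e}_I)\le f(\widehat{\mathbf e}_{I\setminus\{k\}})\vee b_k\quad\text{for all } I\subseteq[n],\ k\in[n].$$ Then $p^+(\widehat{\mathbf e}_J)\le f(\widehat{\mathbf e}_J)$ for all $J\subseteq[n]$.
   Context: $B$ is the Boolean algebra generated by $L$ (with $L$ embedded), with complement $x\mapsto x'$. $f$ monotone means $I\subseteq J\Rightarrow f(\widehat{\mathbf e}_I)\le f(\widehat{\mathbf e}_J)$. Define $c_I^+=f(\widehat{\mathbf e}_I)\vee\bigvee_{i\in I}b_i'\in B$ and $p^+(\mathbf x)=\bigvee_{I\subseteq[n]}(c_I^+\wedge\bigwedge_{i\in I}x_i)$, a polynomial function over $B$. *)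

theory Defs
  imports Main
begin

inductive_set bool_gen :: "'a::boolean_algebra set \<Rightarrow> 'a set" for L where
  gen_base: "x \<in> L \<Longrightarrow> x \<in> bool_gen L"
| gen_bot: "bot \<in> bool_gen L"
| gen_top: "top \<in> bool_gen L"
| gen_sup: "x \<in> bool_gen L \<Longrightarrow> y \<in> bool_gen L \<Longrightarrow> sup x y \<in> bool_gen L"
| gen_inf: "x \<in> bool_gen L \<Longrightarrow> y \<in> bool_gen L \<Longrightarrow> inf x y \<in> bool_gen L"
| gen_compl: "x \<in> bool_gen L \<Longrightarrow> - x \<in> bool_gen L"

definition sublattice :: "'a::lattice set \<Rightarrow> bool" where
  "sublattice L \<longleftrightarrow> (\<forall>x\<in>L. \<forall>y\<in>L. sup x y \<in> L \<and> inf x y \<in> L)"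

definition Join :: "('i \<Rightarrow> 'a::bounded_lattice) \<Rightarrow> 'i set \<Rightarrow> 'a" where
  "Join g A = Sup_fin (insert bot (g ` A))"

definition Meet :: "('i \<Rightarrow> 'a::bounded_lattice) \<Rightarrow> 'i set \<Rightarrow> 'a" where
  "Meet g A = Inf_fin (insert top (g ` A))"

definition ehat :: "(nat \<Rightarrow> 'a) \<Rightarrow> (nat \<Rightarrow> 'a) \<Rightarrow> nat set \<Rightarrow> nat \<Rightarrow> 'a" where
  "ehat a b I = (\<lambda>i. if i \<in> I then b i else a i)"

definition cplus :: "(nat \<Rightarrow> 'a::boolean_algebra) \<Rightarrow> (nat \<Rightarrow> 'a) \<Rightarrow> ((nat \<Rightarrow> 'a) \<Rightarrow> 'a) \<Rightarrow> nat set \<Rightarrow> 'a" where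
  "cplus a b f I = sup (f (ehat a b I)) (Join (\<lambda>i. - b i) I)"

definition pplus :: "nat \<Rightarrow> (nat \<Rightarrow> 'a::boolean_algebra) \<Rightarrow> (nat \<Rightarrow> 'a) \<Rightarrow> ((nat \<Rightarrow> 'a) \<Rightarrow> 'a) \<Rightarrow> (nat \<Rightarrow> 'a) \<Rightarrow> 'a" where
  "pplus n a b f x = Join (\<lambda>I. inf (cplus a b f I) (Meet x I)) (Pow {1..n})"

end

theory Submission
  imports Defs
begin

text \<open>Evaluated at \<open>e_J\<close>, the monomial \<open>m = \<And>\<^sub>i\<^sub>\<in>\<^sub>I x\<^sub>i\<close> lies below \<open>b\<^sub>i\<close> for every \<open>i \<in> I\<close>,
  which kills the complemented part of \<open>c\<^sub>I\<^sup>+\<close>, and below \<open>a\<^sub>i\<close> for every \<open>i \<in> I - J\<close>.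
  Removing the indices of \<open>I - J\<close> one at a time with the lower half of the hypothesis on \<open>f\<close>
  gives \<open>f(e\<^sub>I) \<and> m \<le> f(e\<^sub>I\<^sub>\<inter>\<^sub>J)\<close>, and monotonicity finishes.\<close>

lemma Join_le_iff:
  fixes g :: "'i \<Rightarrow> 'a::bounded_lattice"
  assumes "finite A"
  shows "Join g A \<le> y \<longleftrightarrow> (\<forall>x\<in>A. g x \<le> y)"
  unfolding Join_def using assms by (simp add: Sup_fin.bounded_iff)

lemma le_Meet_iff:
  fixes g :: "'i \<Rightarrow> 'a::bounded_lattice"
  assumes "finite A"
  shows "y \<le> Meet g A \<longleftrightarrow> (\<forall>x\<in>A. y \<le> g x)"
  unfolding Meet_def using assms by (simp add: Inf_fin.bounded_iff)

lemma Meet_le: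
  fixes g :: "'i \<Rightarrow> 'a::bounded_lattice"
  assumes "finite A" and "x \<in> A"
  shows "Meet g A \<le> g x"
  using le_Meet_iff[OF assms(1), of "Meet g A" g] assms(2) by simp

lemma inf_Join_compl_eq_bot:
  fixes b :: "'i \<Rightarrow> 'a::boolean_algebra"
  assumes "finite I" and "\<And>i. i \<in> I \<Longrightarrow> y \<le> b i"
  shows "inf (Join (\<lambda>i. - b i) I) y = bot"
proof -
  have "Join (\<lambda>i. - b i) I \<le> - y"
    using assms by (simp add: Join_le_iff compl_mono)
  then have "inf (Join (\<lambda>i. - b i) I) y \<le> inf (- y) y"
    by (rule inf_mono) simp
  then show ?thesis by (simp add: bot_unique)
qed

lemma inf_Un_le_by_removal:
  fixes F :: "'i set \<Rightarrow> 'a::lattice"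
  assumes step: "\<And>I k. I \<subseteq> N \<Longrightarrow> k \<in> N \<Longrightarrow> inf (F (insert k I)) (a k) \<le> F I"
    and "finite S" and "K \<union> S \<subseteq> N" and "\<And>i. i \<in> S \<Longrightarrow> y \<le> a i"
  shows "inf (F (K \<union> S)) y \<le> F K"
  using assms(2-4)
proof (induction S rule: finite_induct)
  case empty
  then show ?case by simp
next
  case (insert k S)
  have k: "k \<in> N" and KS: "K \<union> S \<subseteq> N" using insert.prems by auto
  have "inf (F (K \<union> insert k S)) y \<le> inf (F (insert k (K \<union> S))) (a k)"
    using insert.prems(2) by (simp add: le_infI2)
  also have "\<dots> \<le> F (K \<union> S)" using step[OF KS k] .
  finally have "inf (F (K \<union> insert k S)) y \<le> inf (F (K \<union> S)) y"
    by (simp add: le_infI1)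
  also have "\<dots> \<le> F K" using insert.IH KS insert.prems(2) by simp
  finally show ?case .
qed

lemma cplus_inf_Meet_le:
  fixes f :: "(nat \<Rightarrow> 'a::boolean_algebra) \<Rightarrow> 'a"
  assumes ab: "\<forall>i\<in>{1..n}. a i \<le> b i"
    and f_mono: "\<forall>I J. I \<subseteq> J \<and> J \<subseteq> {1..n} \<longrightarrow> f (ehat a b I) \<le> f (ehat a b J)"
    and f_lower: "\<And>I k. I \<subseteq> {1..n} \<Longrightarrow> k \<in> {1..n} \<Longrightarrow>
        inf (f (ehat a b (insert k I))) (a k) \<le> f (ehat a b I)"
    and I: "I \<subseteq> {1..n}" and J: "J \<subseteq> {1..n}"
  shows "inf (cplus a b f I) (Meet (ehat a b J) I) \<le> f (ehat a b J)"
proof -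
  define m where "m = Meet (ehat a b J) I"
  have finI: "finite I" using I finite_subset by blast
  have m_le: "m \<le> ehat a b J i" if "i \<in> I" for i
    unfolding m_def using Meet_le[OF finI that] .
  have "m \<le> b i" if "i \<in> I" for i
    using m_le[OF that] ab I that unfolding ehat_def
    by (auto split: if_splits intro: order_trans)
  then have compl_part: "inf (Join (\<lambda>i. - b i) I) m = bot"
    using inf_Join_compl_eq_bot[OF finI] by blast
  have m_le_a: "m \<le> a i" if "i \<in> I - J" for i
    using m_le[of i] that unfolding ehat_def by simp
  have "inf (f (ehat a b ((I \<inter> J) \<union> (I - J)))) m \<le> f (ehat a b (I \<inter> J))"
    using finI I by (intro inf_Un_le_by_removal[where F = "\<lambda>I. f (ehat a b I)", OF f_lower] m_le_a) auto
  also have "\<dots> \<le> f (ehat a b J)" using f_mono J by auto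
  finally have "inf (f (ehat a b ((I \<inter> J) \<union> (I - J)))) m \<le> f (ehat a b J)" .
  moreover have "(I \<inter> J) \<union> (I - J) = I" by blast
  ultimately have f_part: "inf (f (ehat a b I)) m \<le> f (ehat a b J)"
    by simp
  have "inf (cplus a b f I) m = sup (inf (f (ehat a b I)) m) (inf (Join (\<lambda>i. - b i) I) m)"
    unfolding cplus_def by (simp add: inf_sup_distrib2)
  then show ?thesis using f_part compl_part m_def by simp
qed

theorem lemma3p3:
  fixes L :: "'a::boolean_algebra set"
    and n :: nat and a b :: "nat \<Rightarrow> 'a" and f :: "(nat \<Rightarrow> 'a) \<Rightarrow> 'a"
  assumes L_lat: "sublattice L"
    and L_gen: "bool_gen L = UNIV"
    and n_pos: "n \<ge> 1"
    and a_L: "\<forall>i\<in>{1..n}. a i \<in> L" and b_L: "\<forall>i\<in>{1..n}. b i \<in> L"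
    and ab: "\<forall>i\<in>{1..n}. a i < b i"
    and f_L: "\<forall>I. I \<subseteq> {1..n} \<longrightarrow> f (ehat a b I) \<in> L"
    and f_mono: "\<forall>I J. I \<subseteq> J \<and> J \<subseteq> {1..n} \<longrightarrow> f (ehat a b I) \<le> f (ehat a b J)"
    and f_cond: "\<forall>I k. I \<subseteq> {1..n} \<and> k \<in> {1..n} \<longrightarrow>
        inf (f (ehat a b (I \<union> {k}))) (a k) \<le> f (ehat a b I)
      \<and> f (ehat a b I) \<le> sup (f (ehat a b (I - {k}))) (b k)"
  shows "\<forall>J. J \<subseteq> {1..n} \<longrightarrow> pplus n a b f (ehat a b J) \<le> f (ehat a b J)"
proof (intro allI impI)
  fix J assume J: "J \<subseteq> {1..n}"
  have ab_le: "\<forall>i\<in>{1..n}. a i \<le> b i" using ab by (simp add: less_imp_le)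
  have f_lower: "inf (f (ehat a b (insert k I))) (a k) \<le> f (ehat a b I)"
    if "I \<subseteq> {1..n}" "k \<in> {1..n}" for I k
    using f_cond that by simp
  show "pplus n a b f (ehat a b J) \<le> f (ehat a b J)"
    unfolding pplus_def
    using cplus_inf_Meet_le[OF ab_le f_mono f_lower _ J] by (simp add: Join_le_iff)
qed

end
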